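(* Let $L$ be a positive definite lattice with $\operatorname{rank} L\geq 4$ and let $\mathcal{A}_{a,m}$ be an admissible arithmetic progression. If $\mathcal{A}_{a,m}\subseteq Q(\operatorname{gen} L)$, then $\mathcal{A}_{a,m}\cap Q(L)\neq\emptyset$.
   Context: A lattice is a finitely generated $\mathbb{Z}$-submodule $L$ of a finite-dimensional quadratic space $(V,Q)$ over $\mathbb{Q}$, with associated symmetric bilinear form $B$ satisfying $Q(v)=B(v,v)$; it is assumed throughout that the scale of $L$ (the fractional ideal generated by $\{B(x,y):x,y\in L\}$) equals $\mathbb{Z}$. $L$ is positive definite if $Q(v)>0$ for all nonzero $v\in L$. $Q(L)=\{Q(v):v\in L\}$. For a prime $p$, $L_p=\mathbb{Z}_p\otimes L$. $\operatorname{gen}L$ is the genus of $L$ and $Q(\operatorname{gen}L)=\{a\in\mathbb{Z}: a\in Q(K)\text{ for some }K\in\operatorname{gen}L\}$, equivalently the set of integers $a$ with $a\in Q(L_p)$ for all primes $p$. For positive integers $a<m$, $\mathcal{A}_{a,m}=\{a+mx : x\in\mathbb{Z},\ x\geq 0\}$, and $\mathcal{A}_{a,m}$ is admissible if $\operatorname{ord}_p a<\operatorname{ord}_p m$ for every prime $p\mid m$. *)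

theory Defs
  imports Main "HOL-Computational_Algebra.Primes"
begin

text \<open>A lattice of rank n is modelled by its Gram matrix G (w.r.t. a Z-basis),
  entries G i j = B(e_i, e_j) for i, j < n. Vectors are coordinate functions
  nat \<Rightarrow> int (only coordinates < n matter).\<close>

definition qform :: "nat \<Rightarrow> (nat \<Rightarrow> nat \<Rightarrow> int) \<Rightarrow> (nat \<Rightarrow> int) \<Rightarrow> int" where
  "qform n G x = (\<Sum>i<n. \<Sum>j<n. G i j * x i * x j)"

definition sym_gram :: "nat \<Rightarrow> (nat \<Rightarrow> nat \<Rightarrow> int) \<Rightarrow> bool" where
  "sym_gram n G \<longleftrightarrow> (\<forall>i<n. \<forall>j<n. G i j = G j i)"

definition pos_def :: "nat \<Rightarrow> (nat \<Rightarrow> nat \<Rightarrow> int) \<Rightarrow> bool" where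
  "pos_def n G \<longleftrightarrow> (\<forall>x. (\<exists>i<n. x i \<noteq> 0) \<longrightarrow> qform n G x > 0)"

text \<open>Scale of L equals Z: the ideal generated by all B(x,y) (equivalently by the
  Gram entries) is Z.\<close>
definition scale_one :: "nat \<Rightarrow> (nat \<Rightarrow> nat \<Rightarrow> int) \<Rightarrow> bool" where
  "scale_one n G \<longleftrightarrow> Gcd {G i j | i j. i < n \<and> j < n} = 1"

definition QL :: "nat \<Rightarrow> (nat \<Rightarrow> nat \<Rightarrow> int) \<Rightarrow> int set" where
  "QL n G = {qform n G x | x. True}"

text \<open>p-adic integers as the inverse limit of Z/p^k: a coherent sequence of integers
  z with z (k+1) \<equiv> z k (mod p^k); z k is the residue modulo p^k.
  A vector in L_p = Z_p \<otimes> L is given by coherent sequences in each coordinate,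
  X k i being the level-k residue of coordinate i.\<close>
definition padic_coherent :: "int \<Rightarrow> (nat \<Rightarrow> int) \<Rightarrow> bool" where
  "padic_coherent p z \<longleftrightarrow> (\<forall>k. z (Suc k) mod p ^ k = z k mod p ^ k)"

text \<open>a \<in> Q(L_p): some vector of L_p has Q-value a, i.e. Q(X) = a in Z_p,
  i.e. Q(X k) \<equiv> a (mod p^k) for all k.\<close>
definition in_QLp :: "nat \<Rightarrow> (nat \<Rightarrow> nat \<Rightarrow> int) \<Rightarrow> int \<Rightarrow> int \<Rightarrow> bool" where
  "in_QLp n G p a \<longleftrightarrow>
     (\<exists>X :: nat \<Rightarrow> nat \<Rightarrow> int.
        (\<forall>i<n. padic_coherent p (\<lambda>k. X k i)) \<and>
        (\<forall>k. qform n G (X k) mod p ^ k = a mod p ^ k))"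

text \<open>Q(gen L) = integers represented by L_p for every prime p.\<close>
definition QgenL :: "nat \<Rightarrow> (nat \<Rightarrow> nat \<Rightarrow> int) \<Rightarrow> int set" where
  "QgenL n G = {a. \<forall>p. prime p \<longrightarrow> in_QLp n G p a}"

definition AP :: "int \<Rightarrow> int \<Rightarrow> int set" where
  "AP a m = {a + m * x | x. x \<ge> 0}"

definition admissible :: "int \<Rightarrow> int \<Rightarrow> bool" where
  "admissible a m \<longleftrightarrow> 0 < a \<and> a < m \<and>
     (\<forall>p::int. prime p \<longrightarrow> p dvd m \<longrightarrow> multiplicity p a < multiplicity p m)"

end

theory Submission
  imports Defs "HOL-Number_Theory.Number_Theory"
begin

text \<open>Since \<open>a\<close> lies in the progression, it is represented by every \<open>L\<^sub>p\<close>, hence by \<open>L\<close>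
  modulo every prime power, and by the Chinese remainder theorem \<open>Q(x) \<equiv> a (mod m)\<close> for
  some \<open>x \<in> L\<close>. Adding \<open>m\<close> to a coordinate if necessary makes \<open>x \<noteq> 0\<close>, so \<open>Q(x) > 0\<close>
  by positive definiteness; a positive integer \<open>\<equiv> a (mod m)\<close> with \<open>0 < a < m\<close> lies in
  the progression.\<close>

lemma prime_power_coprime_induct:
  fixes P :: "int \<Rightarrow> bool" and M :: int
  assumes prime_power: "\<And>p k. prime p \<Longrightarrow> P (p ^ k)"
    and coprime_mult: "\<And>a b. coprime a b \<Longrightarrow> P a \<Longrightarrow> P b \<Longrightarrow> P (a * b)"
    and "M > 0"
  shows "P M"
proof -
  have "P (\<Prod>p\<in>S. p ^ e p)" if "finite S" "S \<subseteq> {p. prime p}" for S and e :: "int \<Rightarrow> nat"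
    using that
  proof (induction S rule: finite_induct)
    case empty
    show ?case using prime_power[of 2 0] by simp
  next
    case (insert q S)
    have "coprime (q ^ e q) (\<Prod>p\<in>S. p ^ e p)"
      using insert.hyps(2) insert.prems by (intro prod_coprime_right) (auto intro: primes_coprime)
    with insert show ?case by (simp add: coprime_mult prime_power)
  qed
  then have "P (\<Prod>p\<in>prime_factors M. p ^ multiplicity p M)"
    by (simp add: in_prime_factors_imp_prime subsetI)
  with \<open>M > 0\<close> show ?thesis by (simp add: prod_prime_factors)
qed

lemma qform_cong:
  assumes "\<And>i. i < n \<Longrightarrow> [x i = y i] (mod M)"
  shows "[qform n G x = qform n G y] (mod M)"
  unfolding qform_def by (intro cong_sum cong_mult cong_refl) (auto intro: assms)

lemma qform_solvable_mod_mult: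
  fixes M1 M2 :: int
  assumes "coprime M1 M2" "[qform n G u = a] (mod M1)" "[qform n G v = a] (mod M2)"
  shows "\<exists>x. [qform n G x = a] (mod M1 * M2)"
proof -
  obtain x where x: "\<And>i. [x i = u i] (mod M1)" "\<And>i. [x i = v i] (mod M2)"
  proof -
    have "\<forall>i. \<exists>c. [c = u i] (mod M1) \<and> [c = v i] (mod M2)"
      using binary_chinese_remainder_int[OF assms(1)] by blast
    then show thesis using that by metis
  qed
  have "[qform n G x = a] (mod M1)"
    using qform_cong[of n x u] x(1) assms(2) cong_trans by blast
  moreover have "[qform n G x = a] (mod M2)"
    using qform_cong[of n x v] x(2) assms(3) cong_trans by blast
  ultimately show ?thesis using coprime_cong_mult assms(1) by blast
qed

lemma qform_solvable_mod:
  fixes M :: int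
  assumes "\<And>p k. prime p \<Longrightarrow> \<exists>x. [qform n G x = a] (mod p ^ k)" and "M > 0"
  shows "\<exists>x. [qform n G x = a] (mod M)"
proof (rule prime_power_coprime_induct[where P = "\<lambda>M. \<exists>x. [qform n G x = a] (mod M)"])
  show "\<exists>x. [qform n G x = a] (mod p ^ k)" if "prime p" for p k
    using assms(1) that .
  show "\<exists>x. [qform n G x = a] (mod M1 * M2)"
    if "coprime M1 M2" "\<exists>x. [qform n G x = a] (mod M1)" "\<exists>x. [qform n G x = a] (mod M2)" for M1 M2
    using that qform_solvable_mod_mult by blast
qed (rule \<open>M > 0\<close>)

lemma in_QLp_solvable_mod_power:
  assumes "in_QLp n G p a"
  shows "\<exists>x. [qform n G x = a] (mod p ^ k)"
  using assms unfolding in_QLp_def cong_def by blast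

lemma pos_def_cong_qform_pos:
  assumes "pos_def n G" "n > 0" "M \<noteq> 0"
  obtains z where "[qform n G z = qform n G x] (mod M)" "qform n G z > 0"
proof -
  define z where "z = (if \<exists>i<n. x i \<noteq> 0 then x else x(0 := x 0 + M))"
  have "[z i = x i] (mod M)" for i
    by (simp add: z_def cong_def)
  then have "[qform n G z = qform n G x] (mod M)" by (rule qform_cong)
  moreover have "\<exists>i<n. z i \<noteq> 0" using assms(2,3) by (auto simp: z_def)
  then have "qform n G z > 0" using assms(1) unfolding pos_def_def by blast
  ultimately show thesis by (rule that)
qed

lemma AP_memberI:
  fixes a m b :: int
  assumes "0 < m" "a \<le> m" "0 < b" "[b = a] (mod m)"
  shows "b \<in> AP a m"
proof -
  from assms(4) have "[a = b] (mod m)" by (rule cong_sym)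
  then obtain k where k: "b = a + m * k" unfolding cong_iff_lin by blast
  have "k \<ge> 0"
  proof (rule ccontr)
    assume "\<not> k \<ge> 0"
    then have "m * k \<le> m * (-1)"
      by (intro mult_left_mono) (use \<open>0 < m\<close> in auto)
    with k assms(2,3) show False by linarith
  qed
  with k show ?thesis unfolding AP_def by blast
qed

theorem lemma1:
  fixes n :: nat and G :: "nat \<Rightarrow> nat \<Rightarrow> int" and a m :: int
  assumes "sym_gram n G" and "pos_def n G" and "scale_one n G"
    and "n \<ge> 4"
    and "admissible a m"
    and "AP a m \<subseteq> QgenL n G"
  shows "AP a m \<inter> QL n G \<noteq> {}"
proof -
  have am: "0 < a" "a < m" using assms(5) unfolding admissible_def by auto
  have "a = a + m * 0" by simp
  then have "a \<in> AP a m" unfolding AP_def by blast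
  then have "a \<in> QgenL n G" using assms(6) by blast
  then have local_solvable: "\<exists>x. [qform n G x = a] (mod p ^ k)" if "prime p" for p k
    using that in_QLp_solvable_mod_power unfolding QgenL_def by blast
  have "n > 0" "m > 0" "m \<noteq> 0" using assms(4) am by auto
  from qform_solvable_mod[OF local_solvable \<open>m > 0\<close>]
  obtain x where x: "[qform n G x = a] (mod m)" by blast
  obtain z where z_cong: "[qform n G z = qform n G x] (mod m)" and z_pos: "qform n G z > 0"
    using pos_def_cong_qform_pos[OF assms(2) \<open>n > 0\<close> \<open>m \<noteq> 0\<close>] by blast
  from z_cong x have "[qform n G z = a] (mod m)" by (rule cong_trans)
  with am z_pos have "qform n G z \<in> AP a m" by (intro AP_memberI) simp_all
  then show ?thesis unfolding QL_def by blast
qed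

end
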